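(* Let $\alpha\ge0$, $2+\alpha+\sqrt{\alpha^2+\frac72\alpha+3}\le p<2(2+\alpha)$ and $s\in[0,1]$. Then $$B\left(\frac{2+\alpha}{p},1-\frac{2+\alpha}{p}\right)H_{\alpha,p}(s)\le\int_0^1\psi_{\alpha,p}(t)K_{\alpha,p}(s,t)\,dt.$$
   Context: $B(x,y)=\int_0^1 u^{x-1}(1-u)^{y-1}du$ is the Beta function. $\psi_{\alpha,p}(t)=t^{\frac{2+\alpha}{p}-1}(1-t)^{-\frac{2+\alpha}{p}}$ for $0<t<1$. $\binom{\alpha}{k}$ is the generalized binomial coefficient $\frac{\alpha(\alpha-1)\cdots(\alpha-k+1)}{k!}$, $\binom{\alpha}{0}=1$. $H_{\alpha,p}(s)=\sum_{k=0}^\infty\binom{\alpha}{k}(-1)^k\frac{1}{p-2\alpha-2+2k}-\frac{1}{2(\alpha+1)}(1-s^4)^{\alpha+1}$ for $0\le s\le1$, and $K_{\alpha,p}(s,t)=\sum_{k=0}^\infty\binom{\alpha}{k}(-1)^k\frac{1}{p-2\alpha-2+2k}\max\{s^2,t^2\}^{p-2\alpha-2+2k}$ for $0\le s\le1$, $0<t<1$. *)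

theory Defs
  imports "HOL-Analysis.Analysis"
begin

definition psi_ap :: "real \<Rightarrow> real \<Rightarrow> real \<Rightarrow> real" where
  "psi_ap \<alpha> p t = t powr ((2 + \<alpha>) / p - 1) * (1 - t) powr (- ((2 + \<alpha>) / p))"

definition H_ap :: "real \<Rightarrow> real \<Rightarrow> real \<Rightarrow> real" where
  "H_ap \<alpha> p s = (\<Sum>k. (\<alpha> gchoose k) * (-1) ^ k * (1 / (p - 2*\<alpha> - 2 + 2 * real k)))
      - 1 / (2 * (\<alpha> + 1)) * (1 - s ^ 4) powr (\<alpha> + 1)"

definition K_ap :: "real \<Rightarrow> real \<Rightarrow> real \<Rightarrow> real \<Rightarrow> real" where
  "K_ap \<alpha> p s t = (\<Sum>k. (\<alpha> gchoose k) * (-1) ^ k * (1 / (p - 2*\<alpha> - 2 + 2 * real k))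
      * (max (s^2) (t^2)) powr (p - 2*\<alpha> - 2 + 2 * real k))"

end

theory Submission
  imports Defs
begin

(* Write b = (2 + alpha)/p, q = p - 2 alpha - 2 and w x = x^(q-1) (1 - x^2)^alpha. Integrating the
   binomial series of (1 - x^2)^alpha term by term turns the series in K and H into integrals of w:
   with S = int_0^1 w one gets K s t = S - int_(max(s^2,t^2))^1 w and
   H s = S - int_(s^2)^1 x (1 - x^2)^alpha dx. The claim thereby reduces to
     int_0^1 psi t * int_(max(s^2,t^2))^1 w(x) dx dt <= B(b, 1 - b) * int_(s^2)^1 x (1 - x^2)^alpha dx.
   After exchanging the integrals, the inner integral int_0^(sqrt x) psi is at most
   x^(b/2) B(b, 1 - b) (substitute t = sqrt x * tau and use that (1 - t)^(-b) is increasing),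
   and w x * x^(b/2) <= x (1 - x^2)^alpha because q - 1 + b/2 >= 1.
   Term-by-term integration is justified by the absolute summability of the coefficients of
   (1 - y)^alpha for alpha >= 0, which follows from their sign being eventually constant. *)

definition alt_gbinomial :: "real \<Rightarrow> nat \<Rightarrow> real" where
  "alt_gbinomial a k = (a gchoose k) * (-1) ^ k"

lemma alt_gbinomial_Suc:
  "alt_gbinomial a (Suc k) = alt_gbinomial a k * ((real k - a) / (real k + 1))"
proof -
  have h: "(a gchoose Suc k) = (a gchoose k) * (a - real k) / (real k + 1)"
    using gbinomial_mult_1[of a k] by (simp add: field_simps)
  show ?thesis
    unfolding alt_gbinomial_def h by (simp add: field_simps)
qed

lemma alt_gbinomial_eq_prod:
  assumes "N \<le> k"
  shows "alt_gbinomial a k = alt_gbinomial a N * (\<Prod>j=N..<k. (real j - a) / (real j + 1))"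
  using assms
proof (induction k rule: dec_induct)
  case (step k)
  then show ?case by (simp add: alt_gbinomial_Suc prod.atLeastLessThan_Suc)
qed simp

lemma abs_alt_gbinomial_eventually:
  assumes "a \<le> real N" "N \<le> k"
  shows "\<bar>alt_gbinomial a k\<bar> = sgn (alt_gbinomial a N) * alt_gbinomial a k"
proof -
  define P where "P = (\<Prod>j=N..<k. (real j - a) / (real j + 1))"
  have "P \<ge> 0"
    unfolding P_def using assms(1) by (intro prod_nonneg) auto
  then show ?thesis
    unfolding alt_gbinomial_eq_prod[OF assms(2)] P_def[symmetric]
    by (simp add: abs_mult abs_sgn[of "alt_gbinomial a N"] mult_ac)
qed

lemma sums_alt_gbinomial:
  assumes "\<bar>y\<bar> < 1"
  shows "(\<lambda>k. alt_gbinomial a k * y ^ k) sums (1 - y) powr a"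
proof -
  have "(\<lambda>k. (a gchoose k) * (-y) ^ k) sums (1 + (-y)) powr a"
    using assms by (intro gen_binomial_real) simp
  moreover have "(a gchoose k) * (-y) ^ k = alt_gbinomial a k * y ^ k" for k
    unfolding alt_gbinomial_def power_minus[of y k] by (simp only: mult_ac)
  ultimately show ?thesis
    by simp
qed

lemma sum_abs_alt_gbinomial_power_le:
  assumes "a \<ge> 0" "a \<le> real N" "0 \<le> y" "y < 1"
  shows "(\<Sum>k<n. \<bar>alt_gbinomial a k\<bar> * y ^ k) \<le> 1 + 2 * (\<Sum>k<N. \<bar>alt_gbinomial a k\<bar>)"
proof -
  define c where "c = alt_gbinomial a"
  define \<sigma> where "\<sigma> = sgn (c N)"
  define d where "d k = (\<bar>c k\<bar> - \<sigma> * c k) * y ^ k" for k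
  have "d sums (\<Sum>k<N. d k)"
    by (rule sums_finite) (auto simp: d_def \<sigma>_def c_def abs_alt_gbinomial_eventually[OF assms(2)])
  moreover have "(\<lambda>k. \<sigma> * (c k * y ^ k)) sums (\<sigma> * (1 - y) powr a)"
    unfolding c_def using assms by (intro sums_mult sums_alt_gbinomial) auto
  ultimately have "(\<lambda>k. d k + \<sigma> * (c k * y ^ k)) sums ((\<Sum>k<N. d k) + \<sigma> * (1 - y) powr a)"
    by (rule sums_add)
  moreover have "d k + \<sigma> * (c k * y ^ k) = \<bar>c k\<bar> * y ^ k" for k
    by (simp add: d_def algebra_simps)
  ultimately have sums_abs: "(\<lambda>k. \<bar>c k\<bar> * y ^ k) sums (\<sigma> * (1 - y) powr a + (\<Sum>k<N. d k))"
    by (simp add: add.commute)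
  have "(\<Sum>k<n. \<bar>c k\<bar> * y ^ k) \<le> (\<Sum>k. \<bar>c k\<bar> * y ^ k)"
    using sums_abs assms by (intro sum_le_suminf) (auto simp: sums_iff)
  also have "\<dots> = \<sigma> * (1 - y) powr a + (\<Sum>k<N. d k)"
    using sums_abs by (rule sums_unique[symmetric])
  also have "\<sigma> * (1 - y) powr a \<le> 1"
  proof -
    have "\<sigma> * (1 - y) powr a \<le> (1 - y) powr a"
      by (auto simp: \<sigma>_def sgn_if)
    also have "\<dots> \<le> 1"
      using assms by (intro powr_le1) auto
    finally show ?thesis .
  qed
  also have "(\<Sum>k<N. d k) \<le> (\<Sum>k<N. 2 * \<bar>c k\<bar>)"
  proof (intro sum_mono)
    fix k
    have "\<bar>\<sigma> * c k\<bar> \<le> \<bar>c k\<bar>" by (simp add: \<sigma>_def abs_mult abs_sgn_eq sgn_if)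
    moreover have "y ^ k \<le> 1" using assms by (simp add: power_le_one)
    ultimately show "d k \<le> 2 * \<bar>c k\<bar>"
      unfolding d_def using assms by (intro order_trans[OF mult_left_mono[of "y ^ k" 1]]) auto
  qed
  finally show ?thesis by (simp only: c_def sum_distrib_left)
qed

lemma summable_abs_alt_gbinomial:
  assumes "a \<ge> 0"
  shows "summable (\<lambda>k. \<bar>alt_gbinomial a k\<bar>)"
proof (rule summableI_nonneg_bounded)
  fix n
  define M where "M = 1 + 2 * (\<Sum>k<nat \<lceil>a\<rceil>. \<bar>alt_gbinomial a k\<bar>)"
  have "eventually (\<lambda>y::real. y \<in> {0<..<1}) (at_left 1)"
    by (rule eventually_at_left_real) simp
  then have "eventually (\<lambda>y. (\<Sum>k<n. \<bar>alt_gbinomial a k\<bar> * y ^ k) \<le> M) (at_left 1)"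
    unfolding M_def by eventually_elim (use assms in \<open>auto intro!: sum_abs_alt_gbinomial_power_le\<close>)
  moreover have "((\<lambda>y. \<Sum>k<n. \<bar>alt_gbinomial a k\<bar> * y ^ k) \<longlongrightarrow> (\<Sum>k<n. \<bar>alt_gbinomial a k\<bar> * 1 ^ k))
      (at_left 1)"
    by (intro tendsto_intros)
  ultimately have "(\<Sum>k<n. \<bar>alt_gbinomial a k\<bar> * 1 ^ k) \<le> M"
    using tendsto_upperbound by force
  then show "(\<Sum>k<n. \<bar>alt_gbinomial a k\<bar>) \<le> M"
    by simp
qed simp

lemma powr_add_even:
  assumes "0 < x"
  shows "x powr (q + 2 * real k - 1) = x powr (q - 1) * (x\<^sup>2) ^ k"
proof -
  have "x powr (q + 2 * real k - 1) = x powr (q - 1) * x powr real (2 * k)"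
    by (simp add: powr_add[symmetric] algebra_simps)
  also have "x powr real (2 * k) = (x\<^sup>2) ^ k"
    using powr_realpow[OF assms, of "2 * k"] by (simp add: power_mult)
  finally show ?thesis .
qed

lemma sums_alt_gbinomial_powr:
  assumes "0 < x" "x < 1"
  shows "(\<lambda>k. alt_gbinomial a k * x powr (q + 2 * real k - 1)) sums (x powr (q - 1) * (1 - x\<^sup>2) powr a)"
proof -
  have "(\<lambda>k. x powr (q - 1) * (alt_gbinomial a k * (x\<^sup>2) ^ k)) sums (x powr (q - 1) * (1 - x\<^sup>2) powr a)"
    using assms by (intro sums_mult sums_alt_gbinomial) (simp add: abs_square_less_1)
  then show ?thesis
    unfolding powr_add_even[OF assms(1)] by (simp only: mult_ac)
qed

lemma summable_abs_alt_gbinomial_powr: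
  assumes "a \<ge> 0" "0 < x" "x < 1"
  shows "summable (\<lambda>k. \<bar>alt_gbinomial a k * x powr (q + 2 * real k - 1)\<bar>)"
proof (rule summable_comparison_test')
  show "summable (\<lambda>k. x powr (q - 1) * \<bar>alt_gbinomial a k\<bar>)"
    using assms by (intro summable_mult summable_abs_alt_gbinomial)
  fix k
  have "(x\<^sup>2) ^ k \<le> 1"
    using assms by (simp add: power_le_one abs_square_le_1)
  then have "\<bar>alt_gbinomial a k\<bar> * (x powr (q - 1) * (x\<^sup>2) ^ k)
      \<le> \<bar>alt_gbinomial a k\<bar> * x powr (q - 1)"
    by (intro mult_left_mono mult_left_le) auto
  then show "norm \<bar>alt_gbinomial a k * x powr (q + 2 * real k - 1)\<bar>
      \<le> x powr (q - 1) * \<bar>alt_gbinomial a k\<bar>"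
    unfolding powr_add_even[OF assms(2)] by (simp add: abs_mult mult.commute)
qed

lemma has_integral_powr_Ioo:
  fixes m e :: real
  assumes "0 \<le> m" "m \<le> 1" "e > 0"
  shows "((\<lambda>x. x powr (e - 1)) has_integral (1 - m powr e) / e) {m<..<1}"
proof -
  have "((\<lambda>x. x powr (e - 1)) has_integral ((\<lambda>x. x powr e / e) 1 - (\<lambda>x. x powr e / e) m)) {m..1}"
  proof (rule fundamental_theorem_of_calculus_interior)
    show "continuous_on {m..1} (\<lambda>x. x powr e / e)"
      using assms by (intro continuous_intros continuous_on_powr') auto
    fix x assume "x \<in> {m<..<1}"
    then have "((\<lambda>x. x powr e / e) has_real_derivative (e * x powr (e - 1)) / e) (at x)"
      using assms by (intro derivative_eq_intros) auto
    then show "((\<lambda>x. x powr e / e) has_vector_derivative x powr (e - 1)) (at x)"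
      using assms by (simp add: has_real_derivative_iff_has_vector_derivative)
  qed (use assms in simp)
  then show ?thesis
    by (simp add: has_integral_Icc_iff_Ioo diff_divide_distrib)
qed

lemma has_integral_imp_set_lborel_integral:
  fixes f :: "'a::euclidean_space \<Rightarrow> real"
  assumes "f \<in> borel_measurable borel" "S \<in> sets borel"
    and "\<And>x. x \<in> S \<Longrightarrow> 0 \<le> f x" and "(f has_integral I) S"
  shows "set_integrable lborel S f" "(LINT x:S|lborel. f x) = I"
proof -
  have "(\<integral>\<^sup>+x. indicator S x * f x \<partial>lborel) = ennreal I"
    using nn_integral_has_integral_lebesgue[OF assms(3,4)] by simp
  moreover have "(\<lambda>x. indicator S x * f x) \<in> borel_measurable lborel"
    using assms(1,2) by measurable
  moreover have "0 \<le> I"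
    using has_integral_nonneg[OF assms(4,3)] .
  ultimately have "integrable lborel (\<lambda>x. indicator S x * f x)
      \<and> integral\<^sup>L lborel (\<lambda>x. indicator S x * f x) = I"
    using nn_integral_eq_integrable[of "\<lambda>x. indicator S x * f x" lborel I] assms(3)
    by (auto simp: indicator_def)
  then show "set_integrable lborel S f" "(LINT x:S|lborel. f x) = I"
    by (simp_all add: set_integrable_def set_lebesgue_integral_def)
qed

lemma sums_set_integral_alt_gbinomial:
  fixes a q m :: real
  assumes "a \<ge> 0" "q > 0" "0 \<le> m" "m \<le> 1"
  shows "(\<lambda>k. alt_gbinomial a k * ((1 - m powr (q + 2 * real k)) / (q + 2 * real k)))
    sums (LINT x:{m<..<1}|lborel. x powr (q - 1) * (1 - x\<^sup>2) powr a)"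
proof -
  define e where "e k = q + 2 * real k" for k
  define g where "g k x = alt_gbinomial a k * (indicator {m<..<1} x * x powr (e k - 1))" for k x
  have e_pos: "e k > 0" for k
    using assms(2) by (simp add: e_def add_pos_nonneg)
  have power: "set_integrable lborel {m<..<1} (\<lambda>x. x powr (e k - 1))"
    "(LINT x:{m<..<1}|lborel. x powr (e k - 1)) = (1 - m powr e k) / e k" for k
    using has_integral_imp_set_lborel_integral[OF _ _ _ has_integral_powr_Ioo[OF assms(3,4) e_pos]]
    by auto
  have integrable: "integrable lborel (g k)" for k
    using power(1) unfolding g_def set_integrable_def by (intro integrable_mult_right) simp
  have "integral\<^sup>L lborel (g k) = alt_gbinomial a k * ((1 - m powr e k) / e k)" for k
    using power(2) unfolding g_def set_lebesgue_integral_def by simp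
  moreover have "summable (\<lambda>k. \<integral>x. norm (g k x) \<partial>lborel)"
  proof (rule summable_comparison_test')
    show "summable (\<lambda>k. \<bar>alt_gbinomial a k\<bar> / q)"
      using assms(1) by (intro summable_divide summable_abs_alt_gbinomial)
    fix k
    define X where "X = (1 - m powr e k) / e k"
    have "(\<integral>x. norm (g k x) \<partial>lborel) = \<bar>alt_gbinomial a k\<bar> * X"
      using power(2) unfolding g_def set_lebesgue_integral_def X_def by (simp add: abs_mult)
    moreover have "0 \<le> X" "X \<le> 1 / q"
      using assms e_pos[of k] by (auto simp: X_def powr_le1 e_def frac_le)
    ultimately show "norm (\<integral>x. norm (g k x) \<partial>lborel) \<le> \<bar>alt_gbinomial a k\<bar> / q"
      using mult_left_mono[of X "1 / q" "\<bar>alt_gbinomial a k\<bar>"] by (simp add: abs_mult)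
  qed
  moreover have pointwise: "summable (\<lambda>k. norm (g k x))
    \<and> (\<Sum>k. g k x) = indicator {m<..<1} x * (x powr (q - 1) * (1 - x\<^sup>2) powr a)" for x
  proof (cases "x \<in> {m<..<1}")
    case True
    then have "0 < x" "x < 1"
      using assms by auto
    then show ?thesis
      using True summable_abs_alt_gbinomial_powr[OF assms(1)] sums_alt_gbinomial_powr
      by (simp add: g_def e_def sums_iff)
  qed (simp add: g_def)
  ultimately show ?thesis
    using sums_integral[OF integrable _ \<open>summable _\<close>] pointwise
    by (simp add: e_def set_lebesgue_integral_def)
qed

lemma sums_alt_gbinomial_antiderivative:
  fixes a q m :: real
  assumes "a \<ge> 0" "q > 0" "0 \<le> m" "m \<le> 1"
  shows "(\<lambda>k. alt_gbinomial a k * (1 / (q + 2 * real k)) * m powr (q + 2 * real k))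
    sums ((LINT x:{0<..<1}|lborel. x powr (q - 1) * (1 - x\<^sup>2) powr a)
      - (LINT x:{m<..<1}|lborel. x powr (q - 1) * (1 - x\<^sup>2) powr a))"
proof -
  have "(\<lambda>k. alt_gbinomial a k * ((1 - 0 powr (q + 2 * real k)) / (q + 2 * real k))
      - alt_gbinomial a k * ((1 - m powr (q + 2 * real k)) / (q + 2 * real k)))
    sums ((LINT x:{0<..<1}|lborel. x powr (q - 1) * (1 - x\<^sup>2) powr a)
      - (LINT x:{m<..<1}|lborel. x powr (q - 1) * (1 - x\<^sup>2) powr a))"
    using assms by (intro sums_diff sums_set_integral_alt_gbinomial) auto
  then show ?thesis
    by (simp add: right_diff_distrib diff_divide_distrib)
qed

definition beta_kernel :: "real \<Rightarrow> real \<Rightarrow> real" where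
  "beta_kernel b t = t powr (b - 1) * (1 - t) powr (- b)"

lemma beta_kernel_nonneg: "beta_kernel b t \<ge> 0"
  by (simp add: beta_kernel_def)

lemma borel_measurable_beta_kernel [measurable]: "beta_kernel b \<in> borel_measurable borel"
  unfolding beta_kernel_def by measurable

lemma has_integral_beta_kernel:
  fixes b :: real
  assumes "0 < b" "b < 1"
  shows "(beta_kernel b has_integral Beta b (1 - b)) {0<..<1}"
  using has_integral_Beta_real[of b "1 - b"] assms
  unfolding beta_kernel_def[abs_def] by (simp add: has_integral_Icc_iff_Ioo)

lemma Beta_complement_nonneg:
  fixes b :: real
  assumes "0 < b" "b < 1"
  shows "Beta b (1 - b) \<ge> 0"
  using has_integral_nonneg[OF has_integral_beta_kernel[OF assms] beta_kernel_nonneg] .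

lemma beta_kernel_scale_le:
  fixes b r x :: real
  assumes "b \<ge> 0" "0 < r" "r \<le> 1" "0 < x" "x < 1"
  shows "r * beta_kernel b (r * x) \<le> r powr b * beta_kernel b x"
proof -
  have "r * beta_kernel b (r * x) = (r * r powr (b - 1)) * (x powr (b - 1) * (1 - r * x) powr (- b))"
    using assms by (simp add: beta_kernel_def powr_mult)
  also have "r * r powr (b - 1) = r powr b"
    using powr_add[of r 1 "b - 1"] assms by simp
  also have "r powr b * (x powr (b - 1) * (1 - r * x) powr (- b)) \<le> r powr b * beta_kernel b x"
    unfolding beta_kernel_def using assms
    by (intro mult_left_mono powr_mono2') (auto simp: mult_le_cancel_right1)
  finally show ?thesis .
qed

lemma nn_integral_beta_kernel_Ioo_le:
  fixes b r :: real
  assumes b: "0 < b" "b < 1" and r: "0 < r" "r \<le> 1"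
  shows "(\<integral>\<^sup>+t. ennreal (indicator {0<..<r} t * beta_kernel b t) \<partial>lborel)
    \<le> ennreal (r powr b * Beta b (1 - b))"
proof -
  have "(\<integral>\<^sup>+t. ennreal (indicator {0<..<r} t * beta_kernel b t) \<partial>lborel)
      = ennreal \<bar>r\<bar> * (\<integral>\<^sup>+x. ennreal (indicator {0<..<r} (0 + r * x) * beta_kernel b (0 + r * x)) \<partial>lborel)"
    using r by (intro nn_integral_real_affine) auto
  also have "\<dots> = (\<integral>\<^sup>+x. ennreal r * ennreal (indicator {0<..<r} (r * x) * beta_kernel b (r * x)) \<partial>lborel)"
    using r by (subst nn_integral_cmult) auto
  also have "\<dots> \<le> (\<integral>\<^sup>+x. ennreal (r powr b) * ennreal (indicator {0<..<1} x * beta_kernel b x) \<partial>lborel)"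
  proof (intro nn_integral_mono)
    fix x
    show "ennreal r * ennreal (indicator {0<..<r} (r * x) * beta_kernel b (r * x))
        \<le> ennreal (r powr b) * ennreal (indicator {0<..<1} x * beta_kernel b x)"
    proof (cases "0 < x \<and> x < 1")
      case True
      then show ?thesis
        using beta_kernel_scale_le[of b r x] b r beta_kernel_nonneg[of b]
        by (simp add: ennreal_mult[symmetric])
    next
      case False
      then have "r * x \<notin> {0<..<r}"
        using r by (auto simp: zero_less_mult_iff)
      then show ?thesis
        by simp
    qed
  qed
  also have "\<dots> = ennreal (r powr b) * ennreal (Beta b (1 - b))"
    using nn_integral_has_integral_lebesgue[OF beta_kernel_nonneg has_integral_beta_kernel[OF b]]
    by (subst nn_integral_cmult) auto
  also have "\<dots> = ennreal (r powr b * Beta b (1 - b))"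
    using Beta_complement_nonneg[OF b] by (simp add: ennreal_mult)
  finally show ?thesis .
qed

lemma has_integral_x_one_minus_sq_powr:
  fixes a u :: real
  assumes "a > -1" "0 \<le> u" "u \<le> 1"
  shows "((\<lambda>x. x * (1 - x\<^sup>2) powr a) has_integral (1 - u\<^sup>2) powr (a + 1) / (2 * (a + 1))) {u<..<1}"
proof -
  define F where "F x = - ((1 - x\<^sup>2) powr (a + 1) / (2 * (a + 1)))" for x :: real
  have "((\<lambda>x. x * (1 - x\<^sup>2) powr a) has_integral (F 1 - F u)) {u..1}"
  proof (rule fundamental_theorem_of_calculus_interior)
    show "continuous_on {u..1} F"
      unfolding F_def using assms
      by (intro continuous_intros continuous_on_powr') (auto simp: abs_square_le_1)
    fix x assume "x \<in> {u<..<1}"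
    then have "1 - x\<^sup>2 > 0"
      using assms by (simp add: abs_square_less_1)
    then have "((\<lambda>x. (1 - x\<^sup>2) powr (a + 1))
        has_real_derivative (a + 1) * (1 - x\<^sup>2) powr a * (- 2 * x)) (at x)"
      by (auto intro!: derivative_eq_intros)
    then have "(F has_real_derivative - ((a + 1) * (1 - x\<^sup>2) powr a * (- 2 * x) / (2 * (a + 1)))) (at x)"
      unfolding F_def by (intro DERIV_minus DERIV_cdivide)
    moreover have "- ((a + 1) * (1 - x\<^sup>2) powr a * (- 2 * x) / (2 * (a + 1))) = x * (1 - x\<^sup>2) powr a"
      using assms by (simp add: field_simps)
    ultimately show "(F has_vector_derivative x * (1 - x\<^sup>2) powr a) (at x)"
      by (simp add: has_real_derivative_iff_has_vector_derivative)
  qed (use assms in simp)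
  then show ?thesis
    by (simp add: F_def has_integral_Icc_iff_Ioo)
qed

lemma set_integrable_powr_one_minus_sq:
  fixes a q m :: real
  assumes "a \<ge> 0" "q \<ge> 1" "0 \<le> m"
  shows "set_integrable lborel {m<..<1} (\<lambda>x. x powr (q - 1) * (1 - x\<^sup>2) powr a)"
  unfolding set_integrable_def
proof (rule Bochner_Integration.integrable_bound[where f = "indicator {0<..<1} :: real \<Rightarrow> real"])
  have "x powr (q - 1) * (1 - x\<^sup>2) powr a \<le> 1" if "0 < x" "x < 1" for x
    using that assms by (intro mult_le_one powr_le1) (auto simp: abs_square_le_1)
  then show "AE x in lborel. norm (indicator {m<..<1} x *\<^sub>R (x powr (q - 1) * (1 - x\<^sup>2) powr a))
      \<le> norm (indicator {0<..<1} x :: real)"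
    using assms by (auto simp: indicator_def)
qed simp_all

lemma nn_integral_beta_kernel_sq_less_le:
  fixes b x :: real
  assumes b: "0 < b" "b < 1" and x: "0 < x" "x \<le> 1"
  shows "(\<integral>\<^sup>+t. ennreal (if 0 < t \<and> t < 1 \<and> t\<^sup>2 < x then beta_kernel b t else 0) \<partial>lborel)
    \<le> ennreal (x powr (b / 2) * Beta b (1 - b))"
proof -
  have "0 < t \<Longrightarrow> t\<^sup>2 < x \<longleftrightarrow> t < sqrt x" for t
    using x by (metis abs_of_pos real_less_rsqrt real_sqrt_abs real_sqrt_less_iff)
  moreover have "t < sqrt x \<Longrightarrow> t < 1" for t
    using x by (smt (verit) real_sqrt_le_1_iff)
  ultimately have "(if 0 < t \<and> t < 1 \<and> t\<^sup>2 < x then beta_kernel b t else 0)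
      = indicator {0<..<sqrt x} t * beta_kernel b t" for t
    by (auto simp: indicator_def)
  moreover have "sqrt x powr b = x powr (b / 2)"
    using x by (simp add: powr_half_sqrt[symmetric] powr_powr)
  ultimately show ?thesis
    using nn_integral_beta_kernel_Ioo_le[of b "sqrt x"] b x by simp
qed

lemma ennreal_set_integral_eq_nn_integral:
  fixes f :: "'a \<Rightarrow> real"
  assumes "set_integrable M A f" "\<And>x. 0 \<le> f x"
  shows "ennreal (LINT x:A|M. f x) = (\<integral>\<^sup>+x. ennreal (indicator A x * f x) \<partial>M)"
  using nn_integral_eq_integral[of M "\<lambda>x. indicator A x * f x"] assms
  by (simp add: set_integrable_def set_lebesgue_integral_def)

lemma nn_integral_beta_kernel_tail_le:
  fixes a b q u :: real
  assumes a: "a \<ge> 0" and b: "0 < b" "b < 1" and q: "q - 1 + b / 2 \<ge> 1" and u: "0 \<le> u" "u \<le> 1"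
  shows "(\<integral>\<^sup>+t. ennreal (indicator {0<..<1} t * beta_kernel b t
      * (LINT x:{max u (t\<^sup>2)<..<1}|lborel. x powr (q - 1) * (1 - x\<^sup>2) powr a)) \<partial>lborel)
    \<le> ennreal (Beta b (1 - b) * ((1 - u\<^sup>2) powr (a + 1) / (2 * (a + 1))))"
proof -
  define w where "w x = x powr (q - 1) * (1 - x\<^sup>2) powr a" for x :: real
  define H where "H t x = (if 0 < t \<and> t < 1 \<and> max u (t\<^sup>2) < x \<and> x < 1 then beta_kernel b t * w x else 0)"
    for t x :: real
  define B where "B = Beta b (1 - b)"
  have w_nonneg: "w x \<ge> 0" for x
    by (simp add: w_def)
  have w_measurable [measurable]: "w \<in> borel_measurable borel"
    unfolding w_def by measurable
  have B_nonneg: "B \<ge> 0"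
    unfolding B_def using Beta_complement_nonneg[OF b] .
  have inner: "ennreal (indicator {0<..<1} t * beta_kernel b t * (LINT x:{max u (t\<^sup>2)<..<1}|lborel. w x))
      = (\<integral>\<^sup>+x. ennreal (H t x) \<partial>lborel)" for t
  proof -
    have integrable: "set_integrable lborel {max u (t\<^sup>2)<..<1} w"
      unfolding w_def using a b q u by (intro set_integrable_powr_one_minus_sq) auto
    have "0 \<le> (LINT x:{max u (t\<^sup>2)<..<1}|lborel. w x)"
      unfolding set_lebesgue_integral_def by (rule Bochner_Integration.integral_nonneg) (simp add: w_nonneg)
    then have "ennreal (indicator {0<..<1} t * beta_kernel b t * (LINT x:{max u (t\<^sup>2)<..<1}|lborel. w x))
        = ennreal (indicator {0<..<1} t * beta_kernel b t) * ennreal (LINT x:{max u (t\<^sup>2)<..<1}|lborel. w x)"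
      by (intro ennreal_mult) (simp add: beta_kernel_nonneg)
    also have "\<dots> = ennreal (indicator {0<..<1} t * beta_kernel b t)
        * (\<integral>\<^sup>+x. ennreal (indicator {max u (t\<^sup>2)<..<1} x * w x) \<partial>lborel)"
      using ennreal_set_integral_eq_nn_integral[OF integrable w_nonneg] by simp
    also have "\<dots> = (\<integral>\<^sup>+x. ennreal (H t x) \<partial>lborel)"
      using beta_kernel_nonneg w_nonneg
      by (subst nn_integral_cmult[symmetric]) (auto simp: H_def indicator_def ennreal_mult intro!: nn_integral_cong)
    finally show ?thesis .
  qed
  have "(\<lambda>(x, t). ennreal (H t x)) \<in> borel_measurable (lborel \<Otimes>\<^sub>M lborel)"
    unfolding H_def by measurable
  then have swap: "(\<integral>\<^sup>+t. (\<integral>\<^sup>+x. ennreal (H t x) \<partial>lborel) \<partial>lborel)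
      = (\<integral>\<^sup>+x. (\<integral>\<^sup>+t. ennreal (H t x) \<partial>lborel) \<partial>lborel)"
    using lborel_pair.Fubini'[of "\<lambda>x t. ennreal (H t x)"] by simp
  have outer: "(\<integral>\<^sup>+t. ennreal (H t x) \<partial>lborel)
      \<le> ennreal B * ennreal (indicator {u<..<1} x * (x * (1 - x\<^sup>2) powr a))" for x
  proof (cases "u < x \<and> x < 1")
    case True
    then have x: "0 < x" "x < 1"
      using u by auto
    have "(\<integral>\<^sup>+t. ennreal (H t x) \<partial>lborel)
        = ennreal (w x)
          * (\<integral>\<^sup>+t. ennreal (if 0 < t \<and> t < 1 \<and> t\<^sup>2 < x then beta_kernel b t else 0) \<partial>lborel)"
      using True w_nonneg beta_kernel_nonneg
      by (subst nn_integral_cmult[symmetric]) (auto simp: H_def ennreal_mult mult.commute intro!: nn_integral_cong)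
    also have "\<dots> \<le> ennreal (w x) * ennreal (x powr (b / 2) * B)"
      unfolding B_def using x b by (intro mult_left_mono nn_integral_beta_kernel_sq_less_le) auto
    also have "\<dots> = ennreal B * ennreal (w x * x powr (b / 2))"
      using w_nonneg B_nonneg by (simp add: ennreal_mult[symmetric] mult_ac)
    also have "\<dots> \<le> ennreal B * ennreal (x * (1 - x\<^sup>2) powr a)"
    proof (intro mult_left_mono ennreal_leI)
      have "w x * x powr (b / 2) = x powr (q - 1 + b / 2) * (1 - x\<^sup>2) powr a"
        by (simp add: w_def powr_add mult_ac)
      also have "\<dots> \<le> x * (1 - x\<^sup>2) powr a"
        using x q by (intro mult_right_mono powr_le_one_le) auto
      finally show "w x * x powr (b / 2) \<le> x * (1 - x\<^sup>2) powr a" .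
    qed simp
    finally show ?thesis
      using True by simp
  next
    case False
    then have "H t x = 0" for t
      by (auto simp: H_def)
    then show ?thesis
      by simp
  qed
  have "(\<integral>\<^sup>+t. ennreal (indicator {0<..<1} t * beta_kernel b t
      * (LINT x:{max u (t\<^sup>2)<..<1}|lborel. w x)) \<partial>lborel)
      = (\<integral>\<^sup>+x. (\<integral>\<^sup>+t. ennreal (H t x) \<partial>lborel) \<partial>lborel)"
    unfolding inner swap ..
  also have "\<dots> \<le> (\<integral>\<^sup>+x. ennreal B * ennreal (indicator {u<..<1} x * (x * (1 - x\<^sup>2) powr a)) \<partial>lborel)"
    by (intro nn_integral_mono outer)
  also have "\<dots> = ennreal B * ennreal ((1 - u\<^sup>2) powr (a + 1) / (2 * (a + 1)))"
    using nn_integral_has_integral_lebesgue[OF _ has_integral_x_one_minus_sq_powr[of a u]] a u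
    by (subst nn_integral_cmult) auto
  also have "\<dots> = ennreal (B * ((1 - u\<^sup>2) powr (a + 1) / (2 * (a + 1))))"
    by (rule ennreal_mult[symmetric]) (use B_nonneg a in auto)
  finally show ?thesis
    by (simp add: B_def w_def)
qed

lemma integral_le_of_nn_integral_le:
  fixes f :: "'a \<Rightarrow> real"
  assumes "f \<in> borel_measurable M" "\<And>x. 0 \<le> f x"
    and "(\<integral>\<^sup>+x. f x \<partial>M) \<le> ennreal c" "0 \<le> c"
  shows "integrable M f" "integral\<^sup>L M f \<le> c"
proof -
  show "integrable M f"
    using assms by (intro integrableI_nonneg) (auto simp: le_less_trans)
  then have "ennreal (integral\<^sup>L M f) \<le> ennreal c"
    using assms nn_integral_eq_integral[of M f] by simp
  then show "integral\<^sup>L M f \<le> c"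
    using assms(4) by (simp add: ennreal_le_iff)
qed

lemma beta_kernel_integral_lower_bound:
  fixes b S G :: real and K D :: "real \<Rightarrow> real"
  assumes b: "0 < b" "b < 1" and "0 \<le> G"
    and K_measurable: "K \<in> borel_measurable borel"
    and K_eq: "\<And>t. 0 < t \<Longrightarrow> t < 1 \<Longrightarrow> K t = S - D t"
    and D_nonneg: "\<And>t. 0 < t \<Longrightarrow> t < 1 \<Longrightarrow> 0 \<le> D t"
    and D_bound: "(\<integral>\<^sup>+t. ennreal (indicator {0<..<1} t * beta_kernel b t * D t) \<partial>lborel)
      \<le> ennreal (Beta b (1 - b) * G)"
  shows "Beta b (1 - b) * (S - G) \<le> (LINT t:{0<..<1}|lborel. beta_kernel b t * K t)"
proof -
  define g where "g t = indicator {0<..<1} t * beta_kernel b t * (S - K t)" for t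
  have g_eq: "g t = indicator {0<..<1} t * beta_kernel b t * D t" for t
    using K_eq by (simp add: g_def indicator_def)
  have "g \<in> borel_measurable lborel"
    unfolding g_def using K_measurable by measurable
  moreover have "0 \<le> g t" for t
    unfolding g_eq using D_nonneg beta_kernel_nonneg[of b t] by (simp add: indicator_def)
  moreover have "(\<integral>\<^sup>+t. ennreal (g t) \<partial>lborel) \<le> ennreal (Beta b (1 - b) * G)"
    unfolding g_eq by (rule D_bound)
  moreover have "0 \<le> Beta b (1 - b) * G"
    using Beta_complement_nonneg[OF b] \<open>0 \<le> G\<close> by simp
  ultimately have g: "integrable lborel g" "integral\<^sup>L lborel g \<le> Beta b (1 - b) * G"
    by (rule integral_le_of_nn_integral_le)+
  have "set_integrable lborel {0<..<1} (beta_kernel b)"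
    "(LINT t:{0<..<1}|lborel. beta_kernel b t) = Beta b (1 - b)"
    using has_integral_imp_set_lborel_integral[OF _ _ _ has_integral_beta_kernel[OF b]]
    by (auto simp: beta_kernel_nonneg)
  moreover have "(LINT t:{0<..<1}|lborel. beta_kernel b t * K t)
      = integral\<^sup>L lborel (\<lambda>t. S * (indicator {0<..<1} t * beta_kernel b t) - g t)"
    unfolding set_lebesgue_integral_def g_def
    by (intro Bochner_Integration.integral_cong) (auto simp: algebra_simps)
  ultimately have "(LINT t:{0<..<1}|lborel. beta_kernel b t * K t) = S * Beta b (1 - b) - integral\<^sup>L lborel g"
    using g(1) by (simp add: set_integrable_def set_lebesgue_integral_def)
  then show ?thesis
    using g(2) by (simp add: algebra_simps)
qed

text \<open>The hypothesis on \<open>p\<close> says exactly that \<open>p\<close> lies above the larger root of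
  \<open>2p\<^sup>2 - 2(2\<alpha> + 4)p + (2 + \<alpha>)\<close>, i.e. that \<open>q - 1 + b/2 \<ge> 1\<close> for
  \<open>b = (2 + \<alpha>)/p\<close> and \<open>q = p - 2\<alpha> - 2\<close>.\<close>
lemma exponent_bounds_of_sqrt_bound:
  fixes \<alpha> p :: real
  assumes "\<alpha> \<ge> 0" and "2 + \<alpha> + sqrt (\<alpha>\<^sup>2 + 7/2 * \<alpha> + 3) \<le> p"
  shows "0 < (2 + \<alpha>) / p" "(2 + \<alpha>) / p < 1" "1 \<le> (p - 2 * \<alpha> - 2) - 1 + (2 + \<alpha>) / p / 2"
proof -
  define r where "r = sqrt (\<alpha>\<^sup>2 + 7/2 * \<alpha> + 3)"
  have "0 \<le> \<alpha>\<^sup>2 + 7/2 * \<alpha> + 3"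
    using assms(1) zero_le_power2[of \<alpha>] by linarith
  then have r2: "r\<^sup>2 = \<alpha>\<^sup>2 + 7/2 * \<alpha> + 3" and "r \<ge> 0"
    by (simp_all add: r_def)
  have "(\<alpha> + 1)\<^sup>2 \<le> r\<^sup>2"
    using r2 assms(1) by (simp add: power2_eq_square algebra_simps)
  then have r1: "\<alpha> + 1 \<le> r"
    using \<open>r \<ge> 0\<close> by (rule power2_le_imp_le)
  have p: "2 + \<alpha> + r \<le> p"
    using assms(2) by (simp add: r_def)
  then have "p > 0"
    using r1 assms(1) by linarith
  then show "0 < (2 + \<alpha>) / p" "(2 + \<alpha>) / p < 1"
    using p r1 assms(1) by auto
  have "0 \<le> 2 * (p - (2 + \<alpha>) - r) * (p - (2 + \<alpha>) + r)"
    using p \<open>r \<ge> 0\<close> by (intro mult_nonneg_nonneg) auto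
  also have "\<dots> = 2 * p * ((p - 2 * \<alpha> - 2) - 1 + (2 + \<alpha>) / p / 2 - 1)"
    using r2 \<open>p > 0\<close> by (simp add: field_simps power2_eq_square)
  finally show "1 \<le> (p - 2 * \<alpha> - 2) - 1 + (2 + \<alpha>) / p / 2"
    using \<open>p > 0\<close> by (simp add: zero_le_mult_iff)
qed

lemma H_ap_eq_set_integral:
  fixes \<alpha> p s :: real
  assumes "\<alpha> \<ge> 0" "p - 2 * \<alpha> - 2 > 0"
  shows "H_ap \<alpha> p s = (LINT x:{0<..<1}|lborel. x powr (p - 2 * \<alpha> - 3) * (1 - x\<^sup>2) powr \<alpha>)
    - (1 - s ^ 4) powr (\<alpha> + 1) / (2 * (\<alpha> + 1))"
  using sums_alt_gbinomial_antiderivative[of \<alpha> "p - 2 * \<alpha> - 2" 1] assms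
  by (simp add: H_ap_def alt_gbinomial_def sums_iff set_lebesgue_integral_def)

lemma K_ap_eq_set_integral_diff:
  fixes \<alpha> p s t :: real
  assumes "\<alpha> \<ge> 0" "p - 2 * \<alpha> - 2 > 0" "\<bar>s\<bar> \<le> 1" "\<bar>t\<bar> \<le> 1"
  shows "K_ap \<alpha> p s t = (LINT x:{0<..<1}|lborel. x powr (p - 2 * \<alpha> - 3) * (1 - x\<^sup>2) powr \<alpha>)
    - (LINT x:{max (s\<^sup>2) (t\<^sup>2)<..<1}|lborel. x powr (p - 2 * \<alpha> - 3) * (1 - x\<^sup>2) powr \<alpha>)"
proof -
  have "0 \<le> max (s\<^sup>2) (t\<^sup>2)" "max (s\<^sup>2) (t\<^sup>2) \<le> 1"
    using assms(3,4) by (auto simp: le_max_iff_disj abs_square_le_1)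
  from sums_alt_gbinomial_antiderivative[OF assms(1,2) this] show ?thesis
    by (simp add: K_ap_def alt_gbinomial_def sums_iff)
qed

theorem lemma3p3:
  fixes \<alpha> p s :: real
  assumes "\<alpha> \<ge> 0"
    and "2 + \<alpha> + sqrt (\<alpha>^2 + 7/2 * \<alpha> + 3) \<le> p" and "p < 2 * (2 + \<alpha>)"
    and "s \<in> {0..1}"
  shows "Beta ((2 + \<alpha>) / p) (1 - (2 + \<alpha>) / p) * H_ap \<alpha> p s
    \<le> (LINT t:{0<..<1}|lborel. psi_ap \<alpha> p t * K_ap \<alpha> p s t)"
proof -
  define b where "b = (2 + \<alpha>) / p"
  define w where "w x = x powr (p - 2 * \<alpha> - 3) * (1 - x\<^sup>2) powr \<alpha>" for x :: real
  define D where "D t = (LINT x:{max (s\<^sup>2) (t\<^sup>2)<..<1}|lborel. w x)" for t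
  have b: "0 < b" "b < 1" and qb: "1 \<le> (p - 2 * \<alpha> - 2) - 1 + b / 2"
    using exponent_bounds_of_sqrt_bound[OF assms(1,2)] by (simp_all add: b_def)
  have s: "0 \<le> s\<^sup>2" "s\<^sup>2 \<le> 1" "\<bar>s\<bar> \<le> 1"
    using assms(4) by (auto simp: power_le_one)
  have "H_ap \<alpha> p s = (LINT x:{0<..<1}|lborel. w x) - (1 - s ^ 4) powr (\<alpha> + 1) / (2 * (\<alpha> + 1))"
    unfolding w_def using assms(1) b qb by (intro H_ap_eq_set_integral) auto
  moreover have "K_ap \<alpha> p s t = (LINT x:{0<..<1}|lborel. w x) - D t" if "0 < t" "t < 1" for t
    unfolding w_def D_def using assms(1) b qb s that by (intro K_ap_eq_set_integral_diff) auto
  moreover have "K_ap \<alpha> p s \<in> borel_measurable borel"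
    unfolding K_ap_def by measurable
  moreover have "0 \<le> D t" for t
    unfolding D_def w_def set_lebesgue_integral_def by (rule Bochner_Integration.integral_nonneg) simp
  moreover have "(\<integral>\<^sup>+t. ennreal (indicator {0<..<1} t * beta_kernel b t * D t) \<partial>lborel)
      \<le> ennreal (Beta b (1 - b) * ((1 - s ^ 4) powr (\<alpha> + 1) / (2 * (\<alpha> + 1))))"
    using nn_integral_beta_kernel_tail_le[of \<alpha> b "p - 2 * \<alpha> - 2" "s\<^sup>2"] assms(1) b qb s
    by (simp add: D_def w_def power_mult[symmetric])
  moreover have "0 \<le> (1 - s ^ 4) powr (\<alpha> + 1) / (2 * (\<alpha> + 1))"
    using assms(1) by simp
  ultimately show ?thesis
    using beta_kernel_integral_lower_bound[OF b] by (simp add: b_def beta_kernel_def psi_ap_def)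
qed

end
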